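(* Let $R$ be a $*$-ring and $C(R)=\{a\in R\mid ax=xa \text{ for all } x\in R\}$ its center, regarded as a $*$-ring with the restricted involution. Then $R$ is strongly $J$-$*$-clean if and only if (1) $C(R)$ is $J$-$*$-clean, and (2) $R=C(R)+J(R)$.
   Context: All rings are associative with identity. A $*$-ring is a ring $R$ with an involution $*$, i.e. a map $a\mapsto a^*$ with $(a+b)^*=a^*+b^*$, $(ab)^*=b^*a^*$, $(a^* )^*=a$; the center $C(R)$ is closed under $*$. $J(S)$ denotes the Jacobson radical of a ring $S$. A projection is an element $e$ with $e^2=e=e^*$. $R$ is strongly $J$-$*$-clean if every $a\in R$ can be written $a=e+u$ with $e$ a projection, $u\in J(R)$ and $ae=ea$. A $*$-ring $S$ is $J$-$*$-clean if every element of $S$ is the sum of a projection of $S$ and an element of $J(S)$ (no commutation required). *)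

theory Defs
  imports Main
begin

text \<open>A ring R is modelled by the type 'a :: ring_1 (associative, with identity);
  the involution is an explicit function star.\<close>

definition involution :: "('a::ring_1 \<Rightarrow> 'a) \<Rightarrow> bool" where
  "involution star \<longleftrightarrow>
     (\<forall>a b. star (a + b) = star a + star b) \<and>
     (\<forall>a b. star (a * b) = star b * star a) \<and>
     (\<forall>a. star (star a) = a)"

definition center :: "'a::ring_1 set" where
  "center = {a. \<forall>x. a * x = x * a}"

definition is_projection :: "('a::ring_1 \<Rightarrow> 'a) \<Rightarrow> 'a \<Rightarrow> bool" where
  "is_projection star e \<longleftrightarrow> e * e = e \<and> star e = e"

definition left_ideal_in :: "'a::ring_1 set \<Rightarrow> 'a set \<Rightarrow> bool" where
  "left_ideal_in S L \<longleftrightarrow> L \<subseteq> S \<and> 0 \<in> L \<and>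
     (\<forall>x\<in>L. \<forall>y\<in>L. x - y \<in> L) \<and> (\<forall>s\<in>S. \<forall>x\<in>L. s * x \<in> L)"

definition maximal_left_ideal_in :: "'a::ring_1 set \<Rightarrow> 'a set \<Rightarrow> bool" where
  "maximal_left_ideal_in S L \<longleftrightarrow> left_ideal_in S L \<and> L \<noteq> S \<and>
     (\<forall>M. left_ideal_in S M \<and> L \<subseteq> M \<longrightarrow> M = L \<or> M = S)"

text \<open>Jacobson radical of the ring S: intersection of all maximal left ideals
  (equal to S if there are none, i.e. if S is the zero ring).\<close>
definition jacobson :: "'a::ring_1 set \<Rightarrow> 'a set" where
  "jacobson S = S \<inter> \<Inter> {L. maximal_left_ideal_in S L}"

definition strongly_J_star_clean :: "('a::ring_1 \<Rightarrow> 'a) \<Rightarrow> bool" where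
  "strongly_J_star_clean star \<longleftrightarrow>
     (\<forall>a. \<exists>e u. is_projection star e \<and> u \<in> jacobson UNIV \<and> a * e = e * a \<and> a = e + u)"

definition J_star_clean_in :: "('a::ring_1 \<Rightarrow> 'a) \<Rightarrow> 'a set \<Rightarrow> bool" where
  "J_star_clean_in star S \<longleftrightarrow>
     (\<forall>a\<in>S. \<exists>e\<in>S. \<exists>u\<in>jacobson S. is_projection star e \<and> a = e + u)"

end

theory Submission
  imports Defs
begin

text \<open>If R is strongly J-*-clean, every idempotent f = p + u (with p a projection
  commuting with f and u in J(R)) is a projection, because u = f - p satisfies u^3 = u and
  the only such element of J(R) is 0. In a *-ring whose idempotents are all projections,
  a projection e is central: e + e x (1 - e) is idempotent, and comparing it with its adjoint
  kills e x (1 - e); the same for 1 - e kills (1 - e) x e. So the decompositions a = e + u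
  have e central, which gives R = C(R) + J(R); for central a also u is central, and
  C(R) \<inter> J(R) \<subseteq> J(C(R)) because inverses of central units are central.
  Conversely, if R = C(R) + J(R) then J(C(R)) \<subseteq> J(R), so a = (e + v) + j with
  e a central projection and v + j \<in> J(R).

  Throughout, J(S) is handled through the characterisation
  u \<in> J(S) \<longleftrightarrow> u \<in> S \<and> (\<forall>x\<in>S. 1 - x u is left invertible in S).\<close>

definition unital_subring :: "'a::ring_1 set \<Rightarrow> bool" where
  "unital_subring S \<longleftrightarrow> 1 \<in> S \<and> (\<forall>x\<in>S. \<forall>y\<in>S. x - y \<in> S \<and> x * y \<in> S)"

lemma unital_subringD:
  assumes "unital_subring S"
  shows unital_subring_one: "1 \<in> S"
    and unital_subring_zero: "0 \<in> S"
    and unital_subring_diff: "x \<in> S \<Longrightarrow> y \<in> S \<Longrightarrow> x - y \<in> S"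
    and unital_subring_add: "x \<in> S \<Longrightarrow> y \<in> S \<Longrightarrow> x + y \<in> S"
    and unital_subring_mult: "x \<in> S \<Longrightarrow> y \<in> S \<Longrightarrow> x * y \<in> S"
proof -
  show one: "1 \<in> S" and diff: "\<And>x y. x \<in> S \<Longrightarrow> y \<in> S \<Longrightarrow> x - y \<in> S"
    and "x \<in> S \<Longrightarrow> y \<in> S \<Longrightarrow> x * y \<in> S"
    using assms unfolding unital_subring_def by auto
  show zero: "0 \<in> S" using diff[OF one one] by simp
  show "x \<in> S \<Longrightarrow> y \<in> S \<Longrightarrow> x + y \<in> S"
    using diff[of x "0 - y"] diff[OF zero, of y] by simp
qed

lemma unital_subring_UNIV: "unital_subring (UNIV :: 'a::ring_1 set)"
  by (simp add: unital_subring_def)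

lemma unital_subring_center: "unital_subring (center :: 'a::ring_1 set)"
  unfolding unital_subring_def center_def
proof (intro conjI ballI CollectI allI)
  fix x y z :: 'a assume "x \<in> {a. \<forall>x. a * x = x * a}" and "y \<in> {a. \<forall>x. a * x = x * a}"
  then have xz: "x * z = z * x" and yz: "y * z = z * y" by auto
  show "(x - y) * z = z * (x - y)" using xz yz by (simp add: algebra_simps)
  have "x * y * z = x * (z * y)" using yz by (simp add: mult.assoc)
  also have "\<dots> = z * (x * y)" using xz by (simp add: mult.assoc[symmetric])
  finally show "x * y * z = z * (x * y)" .
qed simp

lemma inverse_mem_center:
  fixes c z :: "'a::ring_1"
  assumes c: "c \<in> center" and "z * c = 1" and "c * z = 1"
  shows "z \<in> center"
  unfolding center_def
proof (intro CollectI allI)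
  fix y
  have "z * y = z * y * (c * z)" using \<open>c * z = 1\<close> by simp
  also have "\<dots> = z * (y * c) * z" by (simp add: mult.assoc)
  also have "\<dots> = z * (c * y) * z" using c unfolding center_def by simp
  also have "\<dots> = (z * c) * y * z" by (simp add: mult.assoc)
  finally show "z * y = y * z" using \<open>z * c = 1\<close> by simp
qed

subsection \<open>Left ideals and the Jacobson radical of a subring\<close>

lemma left_ideal_in_add:
  assumes "left_ideal_in S L" "x \<in> L" "y \<in> L"
  shows "x + y \<in> L"
proof -
  have "0 - y \<in> L" using assms unfolding left_ideal_in_def by blast
  then have "x - (0 - y) \<in> L" using assms unfolding left_ideal_in_def by blast
  then show ?thesis by simp
qed

lemma left_ideal_in_eq_if_one_mem:
  assumes "left_ideal_in S L" and "1 \<in> L"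
  shows "L = S"
  using assms mult_1_right unfolding left_ideal_in_def by (metis subsetI subset_antisym)

lemma left_ideal_in_add_left_multiples:
  assumes S: "unital_subring S" and M: "left_ideal_in S M" and u: "u \<in> S"
  shows "left_ideal_in S {m + x * u |m x. m \<in> M \<and> x \<in> S}"
  unfolding left_ideal_in_def
proof (intro conjI ballI subsetI)
  let ?N = "{m + x * u |m x. m \<in> M \<and> x \<in> S}"
  have MS: "M \<subseteq> S" and M0: "0 \<in> M" using M unfolding left_ideal_in_def by auto
  show "y \<in> S" if "y \<in> ?N" for y
    using that MS u by (auto intro: unital_subring_add unital_subring_mult S)
  show "0 \<in> ?N" using M0 unital_subring_zero[OF S] by force
  show "y - y' \<in> ?N" if y: "y \<in> ?N" and y': "y' \<in> ?N" for y y'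
  proof -
    obtain m x m' x' where "m \<in> M" "x \<in> S" "y = m + x * u" "m' \<in> M" "x' \<in> S" "y' = m' + x' * u"
      using y y' by blast
    moreover have "y - y' = (m - m') + (x - x') * u" if "y = m + x * u" "y' = m' + x' * u"
      using that by (simp add: algebra_simps)
    ultimately show ?thesis
      using M unital_subring_diff[OF S] unfolding left_ideal_in_def by blast
  qed
  show "s * y \<in> ?N" if "s \<in> S" and y: "y \<in> ?N" for s y
  proof -
    obtain m x where "m \<in> M" "x \<in> S" "y = m + x * u" using y by blast
    moreover have "s * (m + x * u) = s * m + (s * x) * u" by (simp add: algebra_simps)
    ultimately show ?thesis
      using M \<open>s \<in> S\<close> unital_subring_mult[OF S] unfolding left_ideal_in_def by blast
  qed
qed

lemma left_ideal_in_left_multiples: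
  assumes S: "unital_subring S" and u: "u \<in> S"
  shows "left_ideal_in S {x * u |x. x \<in> S}"
proof -
  have "left_ideal_in S {0}" using unital_subring_zero[OF S] unfolding left_ideal_in_def by simp
  then have "left_ideal_in S {m + x * u |m x. m \<in> {0} \<and> x \<in> S}"
    by (rule left_ideal_in_add_left_multiples[OF S _ u])
  moreover have "{m + x * u |m x. m \<in> {0} \<and> x \<in> S} = {x * u |x. x \<in> S}" by auto
  ultimately show ?thesis by simp
qed

lemma maximal_left_ideal_in_exists:
  assumes S: "unital_subring S" and I: "left_ideal_in S I" and "1 \<notin> I"
  shows "\<exists>M. maximal_left_ideal_in S M \<and> I \<subseteq> M"
proof -
  define A where "A = {L. left_ideal_in S L \<and> I \<subseteq> L \<and> 1 \<notin> L}"
  have "\<exists>U\<in>A. \<forall>X\<in>C. X \<subseteq> U" if C: "C \<in> chains A" for C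
  proof (cases "C = {}")
    case True
    then show ?thesis using I \<open>1 \<notin> I\<close> unfolding A_def by auto
  next
    case False
    have CA: "C \<subseteq> A" using chainsD2[OF C] .
    have "\<Union>C \<in> A"
      unfolding A_def left_ideal_in_def
    proof (intro CollectI conjI ballI)
      show "\<Union>C \<subseteq> S" "0 \<in> \<Union>C" "I \<subseteq> \<Union>C" "1 \<notin> \<Union>C"
        using CA False unfolding A_def left_ideal_in_def by blast+
      show "s * x \<in> \<Union>C" if "s \<in> S" "x \<in> \<Union>C" for s x
        using that CA unfolding A_def left_ideal_in_def by blast
      show "x - y \<in> \<Union>C" if "x \<in> \<Union>C" "y \<in> \<Union>C" for x y
      proof -
        obtain L where "L \<in> C" "x \<in> L" "y \<in> L"
          using \<open>x \<in> \<Union>C\<close> \<open>y \<in> \<Union>C\<close> chainsD[OF C] by blast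
        then show ?thesis using CA unfolding A_def left_ideal_in_def by blast
      qed
    qed
    then show ?thesis by blast
  qed
  then obtain M where M: "M \<in> A" and max: "\<forall>X\<in>A. M \<subseteq> X \<longrightarrow> X = M"
    using Zorn_Lemma2[of A] by blast
  have "maximal_left_ideal_in S M"
    unfolding maximal_left_ideal_in_def
  proof (intro conjI allI impI)
    show "left_ideal_in S M" "M \<noteq> S"
      using M unital_subring_one[OF S] unfolding A_def by auto
    show "N = M \<or> N = S" if "left_ideal_in S N \<and> M \<subseteq> N" for N
      using that M max left_ideal_in_eq_if_one_mem unfolding A_def by blast
  qed
  then show ?thesis using M unfolding A_def by blast
qed

lemma jacobson_mult_left:
  assumes S: "unital_subring S" and s: "s \<in> S" and u: "u \<in> jacobson S"
  shows "s * u \<in> jacobson S"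
proof -
  have "s * u \<in> S" using u s unital_subring_mult[OF S] unfolding jacobson_def by blast
  moreover have "s * u \<in> M" if M: "maximal_left_ideal_in S M" for M
  proof -
    have "left_ideal_in S M" using M unfolding maximal_left_ideal_in_def by blast
    moreover have "u \<in> M" using M u unfolding jacobson_def by blast
    ultimately show ?thesis using s unfolding left_ideal_in_def by blast
  qed
  ultimately show ?thesis unfolding jacobson_def by blast
qed

lemma jacobson_add:
  assumes S: "unital_subring S" and u: "u \<in> jacobson S" and v: "v \<in> jacobson S"
  shows "u + v \<in> jacobson S"
proof -
  have "u + v \<in> S" using u v unital_subring_add[OF S] unfolding jacobson_def by blast
  moreover have "u + v \<in> M" if M: "maximal_left_ideal_in S M" for M
  proof (rule left_ideal_in_add)
    show "left_ideal_in S M" using M unfolding maximal_left_ideal_in_def by blast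
    show "u \<in> M" "v \<in> M" using M u v unfolding jacobson_def by blast+
  qed
  ultimately show ?thesis unfolding jacobson_def by blast
qed

lemma jacobson_one_diff_left_invertible:
  assumes S: "unital_subring S" and u: "u \<in> jacobson S"
  shows "\<exists>z\<in>S. z * (1 - u) = 1"
proof (rule ccontr)
  assume no_inverse: "\<not> (\<exists>z\<in>S. z * (1 - u) = 1)"
  let ?I = "{x * (1 - u) |x. x \<in> S}"
  have "u \<in> S" using u unfolding jacobson_def by blast
  then have "1 - u \<in> S" using unital_subring_diff[OF S unital_subring_one[OF S]] by blast
  then have "left_ideal_in S ?I" by (rule left_ideal_in_left_multiples[OF S])
  moreover have "1 \<notin> ?I" using no_inverse by force
  ultimately obtain M where M: "maximal_left_ideal_in S M" "?I \<subseteq> M"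
    using maximal_left_ideal_in_exists[OF S] by blast
  have M_ideal: "left_ideal_in S M" and "M \<noteq> S"
    using M(1) unfolding maximal_left_ideal_in_def by blast+
  have "1 * (1 - u) \<in> ?I" using unital_subring_one[OF S] by blast
  then have "1 - u \<in> M" using M(2) by auto
  moreover have "u \<in> M" using M(1) u unfolding jacobson_def by blast
  ultimately have "(1 - u) + u \<in> M" by (rule left_ideal_in_add[OF M_ideal])
  then have "M = S" using left_ideal_in_eq_if_one_mem[OF M_ideal] by simp
  then show False using \<open>M \<noteq> S\<close> by simp
qed

lemma mem_jacobson_if_left_invertible:
  assumes S: "unital_subring S" and uS: "u \<in> S"
    and inv: "\<forall>x\<in>S. \<exists>w\<in>S. w * (1 - x * u) = 1"
  shows "u \<in> jacobson S"
  unfolding jacobson_def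
proof (intro IntI InterI uS, unfold mem_Collect_eq)
  fix M assume M: "maximal_left_ideal_in S M"
  have M_ideal: "left_ideal_in S M" and "M \<noteq> S"
    and M_max: "\<And>N. left_ideal_in S N \<Longrightarrow> M \<subseteq> N \<Longrightarrow> N = M \<or> N = S"
    using M unfolding maximal_left_ideal_in_def by blast+
  let ?N = "{m + x * u |m x. m \<in> M \<and> x \<in> S}"
  show "u \<in> M"
  proof (rule ccontr)
    assume "u \<notin> M"
    have "M \<subseteq> ?N"
    proof
      fix m assume "m \<in> M"
      then have "m + 0 * u \<in> ?N" using unital_subring_zero[OF S] by blast
      then show "m \<in> ?N" by simp
    qed
    then have "?N = M \<or> ?N = S"
      using M_max left_ideal_in_add_left_multiples[OF S M_ideal uS] by blast
    moreover have "0 + 1 * u \<in> ?N"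
      using M_ideal unital_subring_one[OF S] unfolding left_ideal_in_def by blast
    then have "u \<in> ?N" by simp
    ultimately have "?N = S" using \<open>u \<notin> M\<close> by blast
    then have "1 \<in> ?N" using unital_subring_one[OF S] by simp
    then obtain m x where m: "m \<in> M" and "x \<in> S" and "1 = m + x * u" by blast
    then have "m = 1 - x * u" by (simp add: algebra_simps)
    then obtain w where "w \<in> S" "w * m = 1" using inv \<open>x \<in> S\<close> by blast
    moreover have "w * m \<in> M" using M_ideal m \<open>w \<in> S\<close> unfolding left_ideal_in_def by blast
    ultimately have "M = S" using left_ideal_in_eq_if_one_mem[OF M_ideal] by simp
    then show False using \<open>M \<noteq> S\<close> by simp
  qed
qed

lemma mem_jacobson_iff_left_invertible:
  assumes S: "unital_subring S"
  shows "u \<in> jacobson S \<longleftrightarrow> u \<in> S \<and> (\<forall>x\<in>S. \<exists>w\<in>S. w * (1 - x * u) = 1)"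
  using jacobson_one_diff_left_invertible[OF S] jacobson_mult_left[OF S]
    mem_jacobson_if_left_invertible[OF S]
  unfolding jacobson_def by blast

lemma jacobson_one_diff_invertible:
  fixes u :: "'a::ring_1"
  assumes u: "u \<in> jacobson UNIV"
  shows "\<exists>z. z * (1 - u) = 1 \<and> (1 - u) * z = 1"
proof -
  obtain v where v: "v * (1 - u) = 1"
    using jacobson_one_diff_left_invertible[OF unital_subring_UNIV u] by blast
  have "1 - v = (- v) * u" using v by (simp add: algebra_simps)
  moreover have "(- v) * u \<in> jacobson UNIV"
    using jacobson_mult_left[OF unital_subring_UNIV UNIV_I u] .
  ultimately have "1 - v \<in> jacobson UNIV" by (simp only:)
  then obtain w where "w * (1 - (1 - v)) = 1"
    using jacobson_one_diff_left_invertible[OF unital_subring_UNIV] by blast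
  then have wv: "w * v = 1" by simp
  have "w = w * (v * (1 - u))" using v by simp
  also have "\<dots> = 1 - u" using wv by (simp add: mult.assoc[symmetric])
  finally show ?thesis using v wv by blast
qed

lemma jacobson_tripotent_eq_zero:
  fixes u :: "'a::ring_1"
  assumes "u \<in> jacobson UNIV" and "u * u * u = u"
  shows "u = 0"
proof -
  have "u * u \<in> jacobson UNIV" using jacobson_mult_left[OF unital_subring_UNIV] assms(1) by blast
  then obtain z where z: "z * (1 - u * u) = 1"
    using jacobson_one_diff_left_invertible[OF unital_subring_UNIV] by blast
  have "u = z * ((1 - u * u) * u)" using z by (simp add: mult.assoc[symmetric])
  also have "\<dots> = 0" using assms(2) by (simp add: algebra_simps)
  finally show ?thesis .
qed

lemma center_inter_jacobson_subset:
  "center \<inter> jacobson UNIV \<subseteq> (jacobson center :: 'a::ring_1 set)"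
proof
  fix u :: 'a assume u: "u \<in> center \<inter> jacobson UNIV"
  have "\<exists>w\<in>center. w * (1 - x * u) = 1" if x: "x \<in> center" for x
  proof -
    have "x * u \<in> jacobson UNIV" using u jacobson_mult_left[OF unital_subring_UNIV] by blast
    then obtain z where z: "z * (1 - x * u) = 1" "(1 - x * u) * z = 1"
      using jacobson_one_diff_invertible by blast
    have "x * u \<in> center" using x u unital_subring_mult[OF unital_subring_center] by blast
    then have "1 - x * u \<in> center"
      using unital_subring_diff[OF unital_subring_center unital_subring_one[OF unital_subring_center]]
      by blast
    then show ?thesis using z inverse_mem_center by blast
  qed
  then show "u \<in> jacobson center"
    using u mem_jacobson_iff_left_invertible[OF unital_subring_center] by blast
qed

lemma jacobson_center_subset:
  assumes decomp: "\<forall>a::'a::ring_1. \<exists>c\<in>center. \<exists>j\<in>jacobson UNIV. a = c + j"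
  shows "jacobson center \<subseteq> (jacobson UNIV :: 'a set)"
proof
  fix v :: 'a assume v: "v \<in> jacobson center"
  have "\<exists>w. w * (1 - x * v) = 1" for x
  proof -
    obtain c j where cj: "c \<in> center" "j \<in> jacobson UNIV" "x = c + j" using decomp by blast
    obtain w where w: "w \<in> center" "w * (1 - c * v) = 1"
      using v cj(1) mem_jacobson_iff_left_invertible[OF unital_subring_center] by blast
    have "v \<in> center" using v unfolding jacobson_def by blast
    then have "j * v = v * j" unfolding center_def by simp
    have "w * (1 - x * v) = w * (1 - c * v) - w * (j * v)" using cj(3) by (simp add: algebra_simps)
    also have "\<dots> = 1 - (w * v) * j" using w(2) \<open>j * v = v * j\<close> by (simp add: mult.assoc)
    finally have "w * (1 - x * v) = 1 - (w * v) * j" .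
    moreover obtain z where "z * (1 - (w * v) * j) = 1"
      using cj(2) jacobson_mult_left[OF unital_subring_UNIV] 
        jacobson_one_diff_left_invertible[OF unital_subring_UNIV] by blast
    ultimately have "(z * w) * (1 - x * v) = 1" by (simp add: mult.assoc)
    then show ?thesis by blast
  qed
  then show "v \<in> jacobson UNIV"
    using mem_jacobson_if_left_invertible[OF unital_subring_UNIV] by blast
qed

subsection \<open>Projections\<close>

lemma
  fixes star :: "'a::ring_1 \<Rightarrow> 'a"
  assumes "involution star"
  shows involution_add: "star (a + b) = star a + star b"
    and involution_mult: "star (a * b) = star b * star a"
    and involution_one: "star 1 = 1"
    and involution_diff: "star (a - b) = star a - star b"
proof -
  show add: "\<And>a b. star (a + b) = star a + star b"
    and mult: "\<And>a b. star (a * b) = star b * star a"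
    using assms unfolding involution_def by auto
  have inv: "\<And>a. star (star a) = a" using assms unfolding involution_def by auto
  have "star (star 1 * 1) = star 1 * star (star 1)" by (rule mult)
  then show "star 1 = 1" using inv by simp
  have "star (a - b) + star b = star a" using add[of "a - b" b] by simp
  then show "star (a - b) = star a - star b" by (simp add: algebra_simps)
qed

lemma is_projection_one_diff:
  assumes inv: "involution star" and e: "is_projection star e"
  shows "is_projection star (1 - e)"
proof -
  have "e * e = e" "star e = e" using e unfolding is_projection_def by auto
  then show ?thesis
    unfolding is_projection_def involution_diff[OF inv] involution_one[OF inv]
    by (simp add: algebra_simps)
qed

lemma idempotent_add_corner:
  fixes e x :: "'a::ring_1"
  assumes ee: "e * e = e"
  shows "(e + e * x * (1 - e)) * (e + e * x * (1 - e)) = e + e * x * (1 - e)"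
proof -
  have "e * (e * y) = e * y" for y using ee by (simp add: mult.assoc[symmetric])
  moreover have "(1 - e) * e = 0" using ee by (simp add: algebra_simps)
  moreover have "(e + e * x * (1 - e)) * (e + e * x * (1 - e))
      = e * e + e * x * ((1 - e) * e) + e * (e * x * (1 - e)) + e * x * ((1 - e) * e) * x * (1 - e)"
    by (simp add: distrib_left distrib_right mult.assoc)
  ultimately show ?thesis using ee by (simp add: mult.assoc)
qed

lemma projection_corner_eq_zero:
  fixes star :: "'a::ring_1 \<Rightarrow> 'a"
  assumes inv: "involution star" and e: "is_projection star e"
    and self_adjoint: "star (e + e * x * (1 - e)) = e + e * x * (1 - e)"
  shows "e * x * (1 - e) = 0"
proof -
  have ee: "e * e = e" and se: "star e = e" using e unfolding is_projection_def by auto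
  have "star (e * x * (1 - e)) = (1 - e) * (star x * e)"
    using se by (simp add: involution_mult[OF inv] involution_diff[OF inv] involution_one[OF inv])
  then have adjoint: "e * x * (1 - e) = (1 - e) * (star x * e)"
    using self_adjoint se by (simp add: involution_add[OF inv])
  have "e * x * (1 - e) = e * (e * x * (1 - e))" using ee by (simp add: mult.assoc[symmetric])
  also have "\<dots> = (e * (1 - e)) * (star x * e)" using adjoint by (simp add: mult.assoc)
  also have "\<dots> = 0" using ee by (simp add: algebra_simps)
  finally show ?thesis .
qed

lemma projection_mem_center_if_idempotents_self_adjoint:
  fixes star :: "'a::ring_1 \<Rightarrow> 'a"
  assumes inv: "involution star" and idem: "\<And>f. f * f = f \<Longrightarrow> star f = f"
    and e: "is_projection star e"
  shows "e \<in> center"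
proof -
  have corner: "p * x * (1 - p) = 0" if p: "is_projection star p" for p x
  proof (rule projection_corner_eq_zero[OF inv p], rule idem, rule idempotent_add_corner)
    show "p * p = p" using p unfolding is_projection_def by blast
  qed
  have "e * x = e * x * e" for x
    using corner[OF e, of x] by (simp add: right_diff_distrib)
  moreover have "x * e = e * x * e" for x
    using corner[OF is_projection_one_diff[OF inv e], of x] by (simp add: left_diff_distrib)
  ultimately show ?thesis unfolding center_def by simp
qed

lemma strongly_J_star_clean_idempotent_self_adjoint:
  fixes star :: "'a::ring_1 \<Rightarrow> 'a"
  assumes "strongly_J_star_clean star" and f: "f * f = f"
  shows "star f = f"
proof -
  obtain p u where p: "is_projection star p" and u: "u \<in> jacobson UNIV"
    and fp: "f * p = p * f" and "f = p + u"
    using assms(1) unfolding strongly_J_star_clean_def by blast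
  then have ud: "u = f - p" by simp
  have pp: "p * p = p" using p unfolding is_projection_def by blast
  have "f * (f * x) = f * x" "p * (p * x) = p * x" "p * (f * x) = f * (p * x)" for x
    using f pp fp by (simp_all add: mult.assoc[symmetric])
  then have "u * u * u = u" unfolding ud using f pp fp by (simp add: algebra_simps)
  then have "u = 0" using jacobson_tripotent_eq_zero u by blast
  then show ?thesis using p \<open>f = p + u\<close> unfolding is_projection_def by simp
qed

theorem corollary2p3:
  fixes star :: "'a::ring_1 \<Rightarrow> 'a"
  assumes "involution star"
  shows "strongly_J_star_clean star \<longleftrightarrow>
    (J_star_clean_in star center \<and>
     (\<forall>a::'a. \<exists>c\<in>center. \<exists>j\<in>jacobson UNIV. a = c + j))"
proof
  assume sc: "strongly_J_star_clean star"
  have decomp: "\<exists>e u. is_projection star e \<and> e \<in> center \<and> u \<in> jacobson UNIV \<and> a = e + u"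
    for a :: 'a
    using sc projection_mem_center_if_idempotents_self_adjoint[OF assms]
      strongly_J_star_clean_idempotent_self_adjoint[OF sc]
    unfolding strongly_J_star_clean_def by blast
  have "\<exists>e\<in>center. \<exists>u\<in>jacobson center. is_projection star e \<and> a = e + u"
    if a: "a \<in> center" for a :: 'a
  proof -
    obtain e u where e: "is_projection star e" "e \<in> center" and u: "u \<in> jacobson UNIV"
      and "a = e + u"
      using decomp by blast
    then have "u \<in> center" using unital_subring_diff[OF unital_subring_center a, of e] by simp
    then have "u \<in> jacobson center" using u center_inter_jacobson_subset by blast
    then show ?thesis using e \<open>a = e + u\<close> by blast
  qed
  then show "J_star_clean_in star center \<and> (\<forall>a::'a. \<exists>c\<in>center. \<exists>j\<in>jacobson UNIV. a = c + j)"
    using decomp unfolding J_star_clean_in_def by blast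
next
  assume "J_star_clean_in star center \<and> (\<forall>a::'a. \<exists>c\<in>center. \<exists>j\<in>jacobson UNIV. a = c + j)"
  then have clean: "J_star_clean_in star center"
    and decomp: "\<forall>a::'a. \<exists>c\<in>center. \<exists>j\<in>jacobson UNIV. a = c + j" by blast+
  show "strongly_J_star_clean star"
    unfolding strongly_J_star_clean_def
  proof
    fix a :: 'a
    obtain c j where cj: "c \<in> center" "j \<in> jacobson UNIV" "a = c + j" using decomp by blast
    obtain e v where ev: "e \<in> center" "v \<in> jacobson center" "is_projection star e" "c = e + v"
      using clean cj(1) unfolding J_star_clean_in_def by blast
    have "v + j \<in> jacobson UNIV"
      using jacobson_add[OF unital_subring_UNIV] jacobson_center_subset[OF decomp] ev(2) cj(2)
      by blast
    moreover have "a = e + (v + j)" "a * e = e * a"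
      using cj ev(1,4) unfolding center_def by (simp_all add: add.assoc)
    ultimately show "\<exists>e u. is_projection star e \<and> u \<in> jacobson UNIV \<and> a * e = e * a \<and> a = e + u"
      using ev(3) by blast
  qed
qed

end
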